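(* Let $n=m=1$ (scalars $A\neq0$, $B\neq0$, $Q,R>0$) in the setting of the context, assume $q<q_c$, and let $\beta\in(0,1)$. If $$N_q>\frac{\log(2/\beta)A^4B^4P^4(R+B^2P)^2}{[Q(R+B^2P)^2+(1-q)RA^2B^2P^2]^2},$$ where $P>0$ solves $P=Q+A^2P-(1-q)(R+B^2P)^{-1}A^2B^2P^2$, then with probability at least $1-\beta$ (over the samples) the following holds: if $\hat q<q_c$, then $\hat K$ mean-square stabilizes the system.
   Context: Consider the scalar system $x_{t+1}=Ax_t+\lambda_tBu_t$, $t\ge0$, with $(A,B)$ stabilizable, $x_0$ random with finite mean and variance and $\{\lambda_t\}$ i.i.d. Bernoulli, independent of $x_0$, with $\mathcal{P}(\lambda_t=0)=q$, $q\in(0,1)$ unknown. The estimate is $\hat q=\frac1{N_q}\sum_{i=1}^{N_q}(1-\lambda_i)$ from $N_q$ i.i.d. samples with the same Bernoulli law. For $p\in[0,1)$ the modified Riccati equation with parameter $p$ is $X=Q+A^2X-(1-p)(R+B^2X)^{-1}A^2B^2X^2$; $q_c$ is the critical loss probability such that for every $p\in[0,q_c)$ this equation has a unique positive solution. For $\hat q\in[0,q_c)$ let $\hat P$ be the positive solution for parameter $\hat q$ and $\hat K=-(R+B^2\hat P)^{-1}AB\hat P$. $\hat K$ mean-square stabilizes the system if the closed loop $x_{t+1}=(A+\lambda_tB\hat K)x_t$ satisfies $\lim_{t\to\infty}\mathbb{E}\{x_t^2\}=0$. *)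

theory Defs
  imports "HOL-Probability.Probability"
begin

definition mare :: "real \<Rightarrow> real \<Rightarrow> real \<Rightarrow> real \<Rightarrow> real \<Rightarrow> real \<Rightarrow> bool" where
  "mare A B Q R p X \<longleftrightarrow>
     X = Q + A^2 * X - (1 - p) * inverse (R + B^2 * X) * A^2 * B^2 * X^2"

definition qcrit :: "real \<Rightarrow> real \<Rightarrow> real \<Rightarrow> real \<Rightarrow> real" where
  "qcrit A B Q R = Sup {r. 0 \<le> r \<and> r \<le> 1 \<and>
      (\<forall>p. 0 \<le> p \<and> p < r \<longrightarrow> (\<exists>!X. X > 0 \<and> mare A B Q R p X))}"

definition mare_sol :: "real \<Rightarrow> real \<Rightarrow> real \<Rightarrow> real \<Rightarrow> real \<Rightarrow> real" where
  "mare_sol A B Q R p = (THE X. X > 0 \<and> mare A B Q R p X)"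

definition gain :: "real \<Rightarrow> real \<Rightarrow> real \<Rightarrow> real \<Rightarrow> real \<Rightarrow> real" where
  "gain A B Q R p = - inverse (R + B^2 * mare_sol A B Q R p) * A * B * mare_sol A B Q R p"

definition xcl :: "real \<Rightarrow> real \<Rightarrow> real \<Rightarrow> real \<Rightarrow> (nat \<Rightarrow> bool) \<Rightarrow> nat \<Rightarrow> real" where
  "xcl A B K x0 lam t = x0 * (\<Prod>i<t. A + (if lam i then 1 else 0) * B * K)"

definition lam_law :: "real \<Rightarrow> nat set \<Rightarrow> (nat \<Rightarrow> bool) pmf" where
  "lam_law q I = Pi_pmf I False (\<lambda>_. bernoulli_pmf (1 - q))"

text \<open>Mean-square stabilization: for every initial distribution with finite second moment
  (hence finite mean and variance), independent of the losses, E[x_t^2] \<rightarrow> 0.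
  E[x_t^2] only depends on lambda_0..lambda_{t-1}, so it is computed over their finite product law.\<close>
definition ms_stabilizes :: "real \<Rightarrow> real \<Rightarrow> real \<Rightarrow> real \<Rightarrow> bool" where
  "ms_stabilizes q A B K \<longleftrightarrow>
     (\<forall>\<mu> :: real measure. prob_space \<mu> \<and> sets \<mu> = sets borel \<and> integrable \<mu> (\<lambda>x. x^2) \<longrightarrow>
        (\<lambda>t. \<integral>\<^sup>+ z. ennreal ((xcl A B K (fst z) (snd z) t)^2)
               \<partial>(\<mu> \<Otimes>\<^sub>M measure_pmf (lam_law q {..<t}))) \<longlonglongrightarrow> 0)"

definition qhat :: "nat \<Rightarrow> (nat \<Rightarrow> bool) \<Rightarrow> real" where
  "qhat N s = (\<Sum>i\<in>{1..N}. 1 - (if s i then 1 else 0)) / real N"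

end

theory Submission
  imports Defs
begin

text \<open>
  In the scalar system the second moment obeys
  E x_{t+1}^2 = (q A^2 + (1 - q) (A + B K)^2) E x_t^2, so K stabilizes in mean square as soon as
  this rate is below 1. For the gain computed from the positive MARE solution X at parameter p,
  one minus the rate at the true q equals A^2 B^2 X / (R + B^2 X) times (m(X) - (q - p)), where
  m is the stability margin defined below. The margin decreases in X and the MARE solution
  increases in p, so every estimate with q - p < m(P) yields a stabilizing gain. By Hoeffding's
  inequality q - \<hat>q \<ge> m(P) has probability at most exp(-2 N m(P)^2), and the sample size
  hypothesis is exactly N m(P)^2 > ln(2 / \<beta>); only this lower tail matters, so the factor 2
  inside the logarithm is slack.
\<close>

lemma nn_integral_lam_law_prod:
  fixes g :: "bool \<Rightarrow> real"
  assumes "finite I" and "0 \<le> q" and "q \<le> 1" and g_nonneg: "\<And>b. 0 \<le> g b"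
  shows "(\<integral>\<^sup>+ lam. ennreal (\<Prod>i\<in>I. g (lam i)) \<partial>lam_law q I)
           = ennreal ((q * g False + (1 - q) * g True) ^ card I)"
proof -
  have bernoulli: "(\<integral>\<^sup>+ b. ennreal (g b) \<partial>bernoulli_pmf (1 - q))
      = ennreal (q * g False + (1 - q) * g True)"
    using assms by (simp add: ennreal_mult' ennreal_plus[symmetric] mult.commute)
  have "(\<integral>\<^sup>+ lam. ennreal (\<Prod>i\<in>I. g (lam i)) \<partial>lam_law q I)
      = (\<integral>\<^sup>+ lam. (\<Prod>i\<in>I. ennreal (g (lam i))) \<partial>lam_law q I)"
    by (simp add: prod_ennreal g_nonneg)
  also have "\<dots> = (\<Prod>i\<in>I. \<integral>\<^sup>+ b. ennreal (g b) \<partial>bernoulli_pmf (1 - q))"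
    unfolding lam_law_def using \<open>finite I\<close> by (rule nn_integral_prod_Pi_pmf)
  also have "\<dots> = ennreal ((q * g False + (1 - q) * g True) ^ card I)"
    using assms by (simp only: bernoulli prod_constant)
      (intro ennreal_power add_nonneg_nonneg mult_nonneg_nonneg; simp)
  finally show ?thesis .
qed

lemma nn_integral_xcl_square:
  fixes \<mu> :: "real measure"
  assumes "integrable \<mu> (\<lambda>x. x^2)" and "0 \<le> q" and "q \<le> 1"
  shows "(\<integral>\<^sup>+ z. ennreal ((xcl A B K (fst z) (snd z) t)^2)
              \<partial>(\<mu> \<Otimes>\<^sub>M measure_pmf (lam_law q {..<t})))
           = ennreal ((\<integral>x. x^2 \<partial>\<mu>) * (q * A^2 + (1 - q) * (A + B * K)^2) ^ t)"
proof -
  let ?L = "measure_pmf (lam_law q {..<t})"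
  define g where "g b = (A + (if b then 1 else 0) * B * K)^2" for b
  have g_nonneg: "0 \<le> g b" for b
    by (simp add: g_def)
  have x0_meas: "(\<lambda>x. ennreal (x^2)) \<in> borel_measurable \<mu>"
    using assms(1) by measurable
  have lam_meas: "(\<lambda>lam. ennreal (\<Prod>i<t. g (lam i))) \<in> borel_measurable ?L"
    by simp
  have "(\<integral>\<^sup>+ z. ennreal ((xcl A B K (fst z) (snd z) t)^2) \<partial>(\<mu> \<Otimes>\<^sub>M ?L))
      = (\<integral>\<^sup>+ z. ennreal ((fst z)^2) * ennreal (\<Prod>i<t. g (snd z i)) \<partial>(\<mu> \<Otimes>\<^sub>M ?L))"
    by (simp add: xcl_def g_def power_mult_distrib prod_power_distrib ennreal_mult')
  also have "\<dots> = (\<integral>\<^sup>+ x. \<integral>\<^sup>+ lam. ennreal (x^2) * ennreal (\<Prod>i<t. g (lam i)) \<partial>?L \<partial>\<mu>)"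
    using x0_meas measurable_compose[OF measurable_snd lam_meas]
    by (subst measure_pmf.nn_integral_fst[symmetric]) (auto intro!: borel_measurable_times_ennreal)
  also have "\<dots> = (\<integral>\<^sup>+ x. ennreal (x^2) \<partial>\<mu>) * (\<integral>\<^sup>+ lam. ennreal (\<Prod>i<t. g (lam i)) \<partial>?L)"
    by (simp add: nn_integral_cmult nn_integral_multc[OF x0_meas])
  also have "(\<integral>\<^sup>+ x. ennreal (x^2) \<partial>\<mu>) = ennreal (\<integral>x. x^2 \<partial>\<mu>)"
    using assms(1) by (intro nn_integral_eq_integral) auto
  also have "(\<integral>\<^sup>+ lam. ennreal (\<Prod>i<t. g (lam i)) \<partial>?L)
      = ennreal ((q * A^2 + (1 - q) * (A + B * K)^2) ^ t)"
    using nn_integral_lam_law_prod[of "{..<t}" q g] assms(2,3) g_nonneg by (simp add: g_def)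
  finally show ?thesis
    by (simp add: ennreal_mult')
qed

lemma ms_stabilizesI:
  assumes "0 \<le> q" and "q \<le> 1" and "q * A^2 + (1 - q) * (A + B * K)^2 < 1"
  shows "ms_stabilizes q A B K"
  unfolding ms_stabilizes_def
proof (intro allI impI, elim conjE)
  fix \<mu> :: "real measure"
  assume "integrable \<mu> (\<lambda>x. x^2)"
  moreover have "(\<lambda>t. ennreal ((\<integral>x. x^2 \<partial>\<mu>) * (q * A^2 + (1 - q) * (A + B * K)^2) ^ t))
      \<longlonglongrightarrow> ennreal 0"
    using assms by (intro tendsto_ennrealI tendsto_mult_right_zero LIMSEQ_power_zero)
      (simp add: add_nonneg_nonneg)
  ultimately show "(\<lambda>t. \<integral>\<^sup>+ z. ennreal ((xcl A B K (fst z) (snd z) t)^2)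
                          \<partial>(\<mu> \<Otimes>\<^sub>M measure_pmf (lam_law q {..<t}))) \<longlonglongrightarrow> 0"
    using assms(1,2) by (simp add: nn_integral_xcl_square)
qed

lemma qcrit_mare_unique:
  assumes "0 \<le> p" and "p < qcrit A B Q R"
  shows "\<exists>!X. X > 0 \<and> mare A B Q R p X"
proof -
  define S where "S = {r. 0 \<le> r \<and> r \<le> 1 \<and>
      (\<forall>p. 0 \<le> p \<and> p < r \<longrightarrow> (\<exists>!X. X > 0 \<and> mare A B Q R p X))}"
  have "0 \<in> S" and "bdd_above S"
    unfolding S_def by (auto intro: bdd_aboveI[of _ 1])
  moreover have "p < Sup S"
    using assms(2) unfolding qcrit_def S_def .
  ultimately obtain r where "r \<in> S" and "p < r"
    using less_cSup_iff by blast
  with assms(1) show ?thesis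
    unfolding S_def by blast
qed

lemma mare_sol_below_qcrit:
  assumes "0 \<le> p" and "p < qcrit A B Q R"
  shows "mare_sol A B Q R p > 0" and "mare A B Q R p (mare_sol A B Q R p)"
  using theI'[OF qcrit_mare_unique[OF assms]] unfolding mare_sol_def by auto

lemma mare_divided:
  fixes X :: real
  assumes "X > 0" and "R > 0" and "mare A B Q R p X"
  shows "Q / X + A^2 - (1 - p) * A^2 * (B^2 * X / (R + B^2 * X)) = 1"
proof -
  define W where "W = R + B^2 * X"
  have "W > 0"
    unfolding W_def using assms by (simp add: add_pos_nonneg)
  have riccati: "Q * W + A^2 * X * W - (1 - p) * A^2 * B^2 * X^2 = X * W"
    using assms(3) \<open>W > 0\<close> unfolding mare_def W_def[symmetric] by (simp add: field_simps)
  have "Q / X + A^2 - (1 - p) * A^2 * (B^2 * X / W)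
      = (Q * W + A^2 * X * W - (1 - p) * A^2 * B^2 * X^2) / (X * W)"
    using \<open>W > 0\<close> \<open>X > 0\<close> by (simp add: field_simps power2_eq_square)
  also have "\<dots> = 1"
    using \<open>W > 0\<close> \<open>X > 0\<close> by (simp add: riccati)
  finally show ?thesis
    unfolding W_def .
qed

lemma mare_pos_solution_mono:
  fixes X P :: real
  assumes "Q > 0" and "R > 0" and "p \<le> q" and "q \<le> 1"
    and "X > 0" and "P > 0" and "mare A B Q R p X" and "mare A B Q R q P"
  shows "X \<le> P"
proof (rule ccontr)
  assume "\<not> X \<le> P"
  then have "P < X" by simp
  have "Q / X < Q / P"
    using assms \<open>P < X\<close> by (simp add: divide_strict_left_mono)
  moreover have "B^2 * P / (R + B^2 * P) \<le> B^2 * X / (R + B^2 * X)"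
  proof -
    have "B^2 * P * R \<le> B^2 * X * R"
      using \<open>P < X\<close> assms by (intro mult_right_mono mult_left_mono) auto
    then have "B^2 * P * (R + B^2 * X) \<le> B^2 * X * (R + B^2 * P)"
      by (simp add: algebra_simps)
    then show ?thesis
      using assms by (simp add: divide_simps add_pos_nonneg)
  qed
  then have "(1 - q) * A^2 * (B^2 * P / (R + B^2 * P))
      \<le> (1 - p) * A^2 * (B^2 * X / (R + B^2 * X))"
    using assms by (intro mult_mono) (auto simp: add_pos_nonneg)
  ultimately show False
    using mare_divided[OF \<open>X > 0\<close> \<open>R > 0\<close> assms(7)]
      mare_divided[OF \<open>P > 0\<close> \<open>R > 0\<close> assms(8)] by linarith
qed

lemma closed_loop_gain:
  assumes "R + B^2 * mare_sol A B Q R p \<noteq> 0"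
  shows "A + B * gain A B Q R p = A * R / (R + B^2 * mare_sol A B Q R p)"
  using assms unfolding gain_def by (simp add: field_simps power2_eq_square)

definition stability_margin :: "real \<Rightarrow> real \<Rightarrow> real \<Rightarrow> real \<Rightarrow> real \<Rightarrow> real \<Rightarrow> real" where
  "stability_margin A B Q R q X = Q * (R + B^2 * X) / (A^2 * B^2 * X^2) + (1 - q) * R / (R + B^2 * X)"

lemma stability_margin_pos:
  assumes "A \<noteq> 0" and "B \<noteq> 0" and "Q > 0" and "R > 0" and "q \<le> 1" and "X > 0"
  shows "stability_margin A B Q R q X > 0"
  unfolding stability_margin_def using assms
  by (intro add_pos_nonneg divide_pos_pos divide_nonneg_pos mult_pos_pos) (auto simp: add_pos_nonneg)

lemma stability_margin_antimono:
  assumes "Q > 0" and "R > 0" and "q \<le> 1" and "0 < X" and "X \<le> P"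
  shows "stability_margin A B Q R q P \<le> stability_margin A B Q R q X"
proof -
  have "(R + B^2 * P) * X^2 \<le> (R + B^2 * X) * P^2"
  proof -
    have "R * X^2 \<le> R * P^2" and "(B^2 * X * P) * X \<le> (B^2 * X * P) * P"
      using assms by (simp_all add: power_mono mult_left_mono)
    then show ?thesis by (simp add: algebra_simps power2_eq_square)
  qed
  then have "Q * (R + B^2 * P) / (A^2 * B^2 * P^2) \<le> Q * (R + B^2 * X) / (A^2 * B^2 * X^2)"
    using assms by (cases "A = 0 \<or> B = 0") (auto simp: divide_simps mult_left_mono ac_simps)
  moreover have "(1 - q) * R / (R + B^2 * P) \<le> (1 - q) * R / (R + B^2 * X)"
    using assms by (intro divide_left_mono) (auto simp: add_pos_nonneg mult_left_mono)
  ultimately show ?thesis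
    unfolding stability_margin_def by linarith
qed

lemma mare_closed_loop_rate:
  fixes X :: real
  assumes "A \<noteq> 0" and "B \<noteq> 0" and "R > 0" and "X > 0" and "mare A B Q R p X"
  shows "1 - (q * A^2 + (1 - q) * (A * R / (R + B^2 * X))^2)
           = A^2 * B^2 * X * (stability_margin A B Q R q X - (q - p)) / (R + B^2 * X)"
proof -
  define W where "W = R + B^2 * X"
  have "W > 0"
    unfolding W_def using assms by (simp add: add_pos_nonneg)
  have riccati: "X * W = Q * W + A^2 * X * W - (1 - p) * A^2 * B^2 * X^2"
    using assms(5) \<open>W > 0\<close> unfolding mare_def W_def[symmetric] by (simp add: field_simps)
  have "1 - (q * A^2 + (1 - q) * (A * R / W)^2)
      = (X * W * W - q * A^2 * X * W^2 - (1 - q) * A^2 * R^2 * X) / (X * W^2)"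
    using \<open>W > 0\<close> \<open>X > 0\<close> by (simp add: field_simps power2_eq_square)
  also have "\<dots> = ((Q * W + A^2 * X * W - (1 - p) * A^2 * B^2 * X^2) * W
                    - q * A^2 * X * W^2 - (1 - q) * A^2 * R^2 * X) / (X * W^2)"
    by (simp only: riccati)
  also have "\<dots> = (Q * W^2 + (1 - q) * A^2 * B^2 * X^2 * R - (q - p) * A^2 * B^2 * X^2 * W) / (X * W^2)"
    unfolding W_def by (simp add: algebra_simps power2_eq_square)
  also have "\<dots> = A^2 * B^2 * X * (stability_margin A B Q R q X - (q - p)) / W"
    using assms \<open>W > 0\<close> unfolding stability_margin_def W_def[symmetric]
    by (simp add: field_simps power2_eq_square)
  finally show ?thesis
    unfolding W_def .
qed

lemma gain_ms_stabilizes_within_margin: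
  assumes "A \<noteq> 0" and "B \<noteq> 0" and "Q > 0" and "R > 0" and "0 \<le> q" and "q \<le> 1"
    and "P > 0" and "mare A B Q R q P"
    and "0 \<le> p" and "p < qcrit A B Q R" and "q - p < stability_margin A B Q R q P"
  shows "ms_stabilizes q A B (gain A B Q R p)"
proof -
  define X where "X = mare_sol A B Q R p"
  have "X > 0" and mare_X: "mare A B Q R p X"
    unfolding X_def using mare_sol_below_qcrit[OF assms(9,10)] by auto
  have W_pos: "R + B^2 * X > 0"
    using \<open>R > 0\<close> \<open>X > 0\<close> by (simp add: add_pos_nonneg)
  have "q - p < stability_margin A B Q R q X"
  proof (cases "p < q")
    case True
    then have "X \<le> P"
      using mare_pos_solution_mono[OF assms(3,4) _ assms(6) \<open>X > 0\<close> assms(7) mare_X assms(8)] by simp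
    then show ?thesis
      using stability_margin_antimono[OF assms(3,4,6) \<open>X > 0\<close>] assms(11) by (meson less_le_trans)
  next
    case False
    then show ?thesis
      using stability_margin_pos[OF assms(1-4,6) \<open>X > 0\<close>] by linarith
  qed
  then have "0 < A^2 * B^2 * X * (stability_margin A B Q R q X - (q - p)) / (R + B^2 * X)"
    using assms(1,2) \<open>X > 0\<close> W_pos by (intro divide_pos_pos mult_pos_pos) simp_all
  then have "q * A^2 + (1 - q) * (A * R / (R + B^2 * X))^2 < 1"
    using mare_closed_loop_rate[OF assms(1,2,4) \<open>X > 0\<close> mare_X, of q] by linarith
  moreover have "A + B * gain A B Q R p = A * R / (R + B^2 * X)"
    using W_pos unfolding X_def by (intro closed_loop_gain) simp
  ultimately show ?thesis
    using ms_stabilizesI[OF assms(5,6)] by simp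
qed

lemma qhat_lower_tail:
  fixes q \<delta> :: real and N :: nat
  assumes "0 \<le> q" and "q \<le> 1" and "N > 0" and "\<delta> \<ge> 0"
  shows "measure_pmf.prob (lam_law q {1..N}) {s. qhat N s \<le> q - \<delta>} \<le> exp (-2 * real N * \<delta>^2)"
proof -
  define L where "L = lam_law q {1..N}"
  define loss where "loss = (\<lambda>i (s :: nat \<Rightarrow> bool). if s i then 0 else 1 :: real)"
  have expectation_loss: "measure_pmf.expectation L (loss i) = q" if "i \<in> {1..N}" for i
  proof -
    have "measure_pmf.expectation L (loss i)
        = measure_pmf.expectation (map_pmf (\<lambda>s. s i) L) (\<lambda>b. if b then 0 else 1 :: real)"
      by (simp add: loss_def)
    also have "map_pmf (\<lambda>s. s i) L = bernoulli_pmf (1 - q)"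
      unfolding L_def lam_law_def using that by (subst Pi_pmf_component) auto
    finally show ?thesis
      using assms by simp
  qed
  interpret Hoeffding_ineq "measure_pmf L" "{1..N}" loss "\<lambda>_. 0" "\<lambda>_. 1"
    "\<Sum>i\<in>{1..N}. measure_pmf.expectation L (loss i)"
  proof unfold_locales
    show "prob_space.indep_vars (measure_pmf L) (\<lambda>_. borel) loss {1..N}"
      unfolding L_def lam_law_def loss_def
      by (intro prob_space.indep_vars_compose2[OF _ indep_vars_Pi_pmf])
         (auto simp: measure_pmf.prob_space_axioms)
  qed (auto simp: loss_def)
  have mean: "(\<Sum>i\<in>{1..N}. measure_pmf.expectation L (loss i)) = real N * q"
    using expectation_loss by simp
  have qhat_eq: "qhat N s = (\<Sum>i\<in>{1..N}. loss i s) / real N" for s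
    unfolding qhat_def loss_def by (intro arg_cong[where f="\<lambda>x. x / real N"] sum.cong) auto
  have "{s. qhat N s \<le> q - \<delta>}
      = {s \<in> space (measure_pmf L). (\<Sum>i\<in>{1..N}. loss i s) \<le> real N * q - real N * \<delta>}"
    using assms(3) by (auto simp: qhat_eq divide_simps algebra_simps)
  moreover have "measure_pmf.prob L
        {s \<in> space (measure_pmf L). (\<Sum>i\<in>{1..N}. loss i s) \<le> real N * q - real N * \<delta>}
      \<le> exp (-2 * (real N * \<delta>)^2 / (\<Sum>i\<in>{1..N}. (1 - 0)^2))"
    using Hoeffding_ineq_le[of "real N * \<delta>"] assms unfolding mean by simp
  moreover have "exp (-2 * (real N * \<delta>)^2 / (\<Sum>i\<in>{1..N}. (1 - 0)^2))
      = exp (-2 * real N * \<delta>^2)"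
    using assms(3) by (simp add: power2_eq_square)
  ultimately show ?thesis
    unfolding L_def by simp
qed

lemma qhat_nonneg: "0 \<le> qhat N s"
  unfolding qhat_def by (intro divide_nonneg_nonneg sum_nonneg) auto

lemma measure_pmf_prob_ge_if_compl_subset:
  assumes "measure_pmf.prob M S \<le> \<beta>" and "- S \<subseteq> T"
  shows "measure_pmf.prob M T \<ge> 1 - \<beta>"
proof -
  have "1 - \<beta> \<le> measure_pmf.prob M (- S)"
    using assms(1) measure_pmf.prob_compl[of S M] by (simp add: Compl_eq_Diff_UNIV)
  also have "\<dots> \<le> measure_pmf.prob M T"
    using assms(2) by (intro measure_pmf.finite_measure_mono) simp_all
  finally show ?thesis .
qed

lemma sample_size_eq_div_stability_margin:
  assumes "A \<noteq> 0" and "B \<noteq> 0" and "P > 0" and "R > 0"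
  shows "c * A^4 * B^4 * P^4 * (R + B^2 * P)^2
             / (Q * (R + B^2 * P)^2 + (1 - q) * R * A^2 * B^2 * P^2)^2
           = c / (stability_margin A B Q R q P)^2"
proof -
  define W where "W = R + B^2 * P"
  have "W > 0"
    unfolding W_def using assms by (simp add: add_pos_nonneg)
  have "stability_margin A B Q R q P
      = (Q * W^2 + (1 - q) * R * A^2 * B^2 * P^2) / (A^2 * B^2 * P^2 * W)"
    unfolding stability_margin_def W_def[symmetric] using assms \<open>W > 0\<close>
    by (simp add: field_simps power2_eq_square)
  moreover have "(A^2 * B^2 * P^2 * W)^2 = A^4 * B^4 * P^4 * W^2"
    by (simp add: power_mult_distrib flip: power_mult)
  ultimately show ?thesis
    unfolding W_def[symmetric] by (simp add: power_divide mult.assoc)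
qed

lemma exp_sample_size_le:
  fixes \<beta> \<delta> :: real and N :: nat
  assumes "0 < \<beta>" and "\<beta> < 1" and "\<delta> \<noteq> 0" and "real N > ln (2 / \<beta>) / \<delta>^2"
  shows "exp (-2 * real N * \<delta>^2) \<le> \<beta>"
proof -
  have "ln (2 / \<beta>) < real N * \<delta>^2"
    using assms(3,4) by (simp add: pos_divide_less_eq)
  moreover have "ln (2 / \<beta>) = ln 2 - ln \<beta>" and "ln \<beta> < 0" and "ln 2 > (0::real)"
    using assms(1,2) by (simp_all add: ln_div)
  ultimately have "-2 * real N * \<delta>^2 \<le> ln \<beta>"
    by linarith
  then show ?thesis
    using assms(1) by (metis exp_le_cancel_iff exp_ln)
qed

theorem mainTheorem10:
  fixes A B Q R q \<beta> P :: real and N :: nat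
  assumes "A \<noteq> 0" and "B \<noteq> 0" and "Q > 0" and "R > 0"
    and "0 < q" and "q < 1" and "q < qcrit A B Q R"
    and "0 < \<beta>" and "\<beta> < 1"
    and "P > 0" and "mare A B Q R q P"
    and "real N > ln (2 / \<beta>) * A^4 * B^4 * P^4 * (R + B^2 * P)^2
                  / (Q * (R + B^2 * P)^2 + (1 - q) * R * A^2 * B^2 * P^2)^2"
  shows "measure_pmf.prob (lam_law q {1..N})
           {s. qhat N s < qcrit A B Q R \<longrightarrow> ms_stabilizes q A B (gain A B Q R (qhat N s))}
         \<ge> 1 - \<beta>"
proof -
  define \<delta> where "\<delta> = stability_margin A B Q R q P"
  define bad where "bad = {s. qhat N s \<le> q - \<delta>}"
  have "\<delta> > 0"
    unfolding \<delta>_def using assms by (intro stability_margin_pos) simp_all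
  have N_bound: "real N > ln (2 / \<beta>) / \<delta>^2"
    using assms(12) unfolding \<delta>_def sample_size_eq_div_stability_margin[OF assms(1,2,10,4)] .
  moreover have "ln (2 / \<beta>) / \<delta>^2 > 0"
    using assms(8,9) \<open>\<delta> > 0\<close> by simp
  ultimately have "N > 0"
    by simp
  have "measure_pmf.prob (lam_law q {1..N}) bad \<le> \<beta>"
    unfolding bad_def using qhat_lower_tail[of q N \<delta>] exp_sample_size_le[OF assms(8,9) _ N_bound]
      assms(5,6) \<open>N > 0\<close> \<open>\<delta> > 0\<close> by simp
  moreover have "- bad \<subseteq>
      {s. qhat N s < qcrit A B Q R \<longrightarrow> ms_stabilizes q A B (gain A B Q R (qhat N s))}"
    unfolding bad_def \<delta>_def using assms qhat_nonneg
    by (auto intro!: gain_ms_stabilizes_within_margin[where P = P])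
  ultimately show ?thesis
    by (rule measure_pmf_prob_ge_if_compl_subset)
qed

end
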